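(* Let $q\ge2$, $k>0$, and $p\ge q+k+1$, and let $V(x)=\frac{x^p}{p}-\frac{x^q}{q}$ for $x\ge0$, so $V'(x)=x^{p-1}-x^{q-1}$. Let $c\in(0,1)$ be the unique solution in $(0,1)$ of $x^{q+k}-x^{q-1}=k(x-1)$. Then $(x-1)V'(x)\ge k(x-1)^2$ for all $x\in[c,\infty)$. *)

theory Defs
  imports Complex_Main
begin

definition V :: "real \<Rightarrow> real \<Rightarrow> real \<Rightarrow> real" where
  "V p q x = x powr p / p - x powr q / q"

definition V' :: "real \<Rightarrow> real \<Rightarrow> real \<Rightarrow> real" where
  "V' p q x = x powr (p - 1) - x powr (q - 1)"

end

theory Submission
  imports Defs "HOL-Analysis.Analysis"
begin

text \<open>
  Let \<open>gap y = y^(q-1) - y^(q+k) - k(1 - y)\<close>, so that \<open>c\<close> is the only zero of \<open>gap\<close> in \<open>(0,1)\<close>.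
  Convexity of \<open>t \<mapsto> t^(k+1)\<close> shows \<open>gap > 0\<close> just below \<open>1\<close>; being continuous without
  zeros in \<open>(c,1)\<close>, \<open>gap\<close> is then nonnegative on \<open>[c,1)\<close>. There \<open>x^(p-1) \<le> x^(q+k)\<close>, whence
  \<open>V'(x) \<le> k(x - 1)\<close>. For \<open>x \<ge> 1\<close> the tangent of \<open>t \<mapsto> t^(p-q)\<close> at \<open>1\<close> gives
  \<open>V'(x) \<ge> x^(p-q) - 1 \<ge> (p - q)(x - 1) \<ge> k(x - 1)\<close>. Multiplying by \<open>x - 1\<close> gives the claim.
\<close>

definition gap :: "real \<Rightarrow> real \<Rightarrow> real \<Rightarrow> real" where
  "gap q k y = y powr (q - 1) - y powr (q + k) - k * (1 - y)"

lemma powr_above_tangent: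
  fixes a x y :: real
  assumes "a \<ge> 1" "x > 0" "y > 0"
  shows "a * x powr (a - 1) * (y - x) \<le> y powr a - x powr a"
proof -
  have "(\<lambda>t. a * t powr (a - 1)) x * (y - x) \<le> (\<lambda>t. t powr a) y - (\<lambda>t. t powr a) x"
  proof (rule f''_imp_f'[where C="{0<..}" and f''="\<lambda>t. a * ((a - 1) * t powr (a - 2))"])
    fix t :: real assume "t \<in> {0<..}"
    then show "DERIV (\<lambda>t. t powr a) t :> a * t powr (a - 1)"
      and "DERIV (\<lambda>t. a * t powr (a - 1)) t :> a * ((a - 1) * t powr (a - 2))"
      by (auto intro!: derivative_eq_intros simp: diff_diff_eq)
    show "0 \<le> a * ((a - 1) * t powr (a - 2))" using assms by simp
  qed (use assms in auto)
  then show ?thesis by simp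
qed

lemma nonneg_if_no_zero_between:
  fixes f :: "real \<Rightarrow> real"
  assumes "continuous_on {c..d} f" "0 \<le> f c" "0 < f d"
    and "\<And>z. c < z \<Longrightarrow> z < d \<Longrightarrow> f z \<noteq> 0"
    and "c \<le> x" "x \<le> d"
  shows "0 \<le> f x"
proof (rule ccontr)
  assume "\<not> 0 \<le> f x"
  moreover have "continuous_on {x..d} f"
    using assms(1) by (rule continuous_on_subset) (use assms(5) in auto)
  ultimately obtain z where "x \<le> z" "z \<le> d" "f z = 0"
    using IVT'[of f x 0 d] assms(3,6) by auto
  moreover have "z \<noteq> x" "z \<noteq> d"
    using \<open>\<not> 0 \<le> f x\<close> \<open>f z = 0\<close> assms(3) by auto
  ultimately have "c < z" "z < d"
    using assms(5) by auto
  with assms(4) \<open>f z = 0\<close> show False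
    by blast
qed

lemma gap_eq_0_iff: "gap q k y = 0 \<longleftrightarrow> y powr (q + k) - y powr (q - 1) = k * (y - 1)"
  unfolding gap_def right_diff_distrib by linarith

lemma continuous_on_gap: "0 < a \<Longrightarrow> continuous_on {a..b} (gap q k)"
  unfolding gap_def by (intro continuous_intros) auto

lemma gap_pos:
  fixes q k y :: real
  assumes "k > 0" "0 < y" "y < 1" "k / (k + 1) < y powr (q - 1 + k)"
  shows "0 < gap q k y"
proof -
  have "(k + 1) * y powr (k + 1 - 1) * (1 - y) \<le> 1 powr (k + 1) - y powr (k + 1)"
    by (rule powr_above_tangent) (use assms in auto)
  then have tangent: "(k + 1) * y powr k * (1 - y) \<le> 1 - y powr (k + 1)"
    by simp
  have "(1 - y) * ((k + 1) * y powr (q - 1 + k) - k)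
      = y powr (q - 1) * ((k + 1) * y powr k * (1 - y)) - k * (1 - y)"
    unfolding powr_add[of y "q - 1" k] by (simp add: algebra_simps)
  also have "\<dots> \<le> y powr (q - 1) * (1 - y powr (k + 1)) - k * (1 - y)"
    using tangent by (intro diff_right_mono mult_left_mono) auto
  also have "\<dots> = gap q k y"
    unfolding gap_def using powr_add[of y "q - 1" "k + 1"] by (simp add: algebra_simps)
  finally have "(1 - y) * ((k + 1) * y powr (q - 1 + k) - k) \<le> gap q k y" .
  moreover have "0 < (1 - y) * ((k + 1) * y powr (q - 1 + k) - k)"
    using assms(1,3,4) by (intro mult_pos_pos) (auto simp: field_simps)
  ultimately show ?thesis
    by linarith
qed

lemma eventually_gap_pos:
  fixes q k :: real
  assumes "k > 0" "q \<ge> 1"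
  shows "eventually (\<lambda>y. 0 < gap q k y) (at_left 1)"
proof -
  have "((\<lambda>y. y powr (q - 1 + k)) \<longlongrightarrow> 1) (at_left 1)"
    by (rule tendsto_eq_intros refl | simp)+
  then have "eventually (\<lambda>y. k / (k + 1) < y powr (q - 1 + k)) (at_left 1)"
    using assms(1) by (intro order_tendstoD(1)) auto
  moreover have "eventually (\<lambda>y. y \<in> {0<..<1}) (at_left (1::real))"
    by (rule eventually_at_left_real) simp
  ultimately show ?thesis
    by eventually_elim (auto intro: gap_pos[OF assms(1)])
qed

lemma gap_nonneg_below_one:
  fixes q k c x :: real
  assumes "k > 0" "q \<ge> 1" "0 < c" "gap q k c = 0"
    and "\<And>y. 0 < y \<Longrightarrow> y < 1 \<Longrightarrow> gap q k y = 0 \<Longrightarrow> y = c"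
    and "c \<le> x" "x < 1"
  shows "0 \<le> gap q k x"
proof -
  obtain b where "b < 1" and b: "\<And>y. b < y \<Longrightarrow> y < 1 \<Longrightarrow> 0 < gap q k y"
    using eventually_gap_pos[OF assms(1,2)] by (auto simp: eventually_at_left_field)
  define d where "d = (max b x + 1) / 2"
  have "x < d" "d < 1" "0 < gap q k d"
    using \<open>b < 1\<close> \<open>x < 1\<close> b[of d] by (auto simp: d_def)
  show ?thesis
  proof (rule nonneg_if_no_zero_between[of c d "gap q k"])
    show "continuous_on {c..d} (gap q k)"
      using assms(3) by (simp add: continuous_on_gap)
    fix z assume "c < z" "z < d"
    then show "gap q k z \<noteq> 0"
      using assms(3) assms(5)[of z] \<open>d < 1\<close> by auto
  qed (use assms(4,6) \<open>x < d\<close> \<open>0 < gap q k d\<close> in auto)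
qed

lemma V'_above_linear:
  fixes p q x :: real
  assumes "q \<ge> 1" "p - q \<ge> 1" "x \<ge> 1"
  shows "(p - q) * (x - 1) \<le> V' p q x"
proof -
  have "(p - q) * 1 powr (p - q - 1) * (x - 1) \<le> x powr (p - q) - 1 powr (p - q)"
    by (rule powr_above_tangent) (use assms in auto)
  then have tangent: "(p - q) * (x - 1) \<le> x powr (p - q) - 1"
    by simp
  have "1 \<le> x powr (q - 1)"
    using assms by (intro ge_one_powr_ge_zero) auto
  moreover have "0 \<le> x powr (p - q) - 1"
    using assms by (simp add: ge_one_powr_ge_zero)
  ultimately have "x powr (p - q) - 1 \<le> x powr (q - 1) * (x powr (p - q) - 1)"
    by (simp add: mult_le_cancel_right1)
  also have "\<dots> = V' p q x"
    unfolding V'_def using powr_add[of x "q - 1" "p - q"] by (simp add: algebra_simps)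
  finally show ?thesis
    using tangent by linarith
qed

lemma V'_below_linear:
  fixes p q k x :: real
  assumes "p - 1 \<ge> q + k" "0 < x" "x < 1" "0 \<le> gap q k x"
  shows "V' p q x \<le> k * (x - 1)"
proof -
  have "x powr (p - 1) \<le> x powr (q + k)"
    using assms by (intro powr_mono') auto
  then show ?thesis
    using assms(4) unfolding V'_def gap_def by (simp add: algebra_simps)
qed

lemma le_times_square_if_sign_bounds:
  fixes x v k :: real
  assumes "x < 1 \<Longrightarrow> v \<le> k * (x - 1)" "x \<ge> 1 \<Longrightarrow> k * (x - 1) \<le> v"
  shows "k * (x - 1)^2 \<le> (x - 1) * v"
proof (cases "x < 1")
  case True
  then have "(x - 1) * (k * (x - 1)) \<le> (x - 1) * v"
    using assms(1) by (intro mult_left_mono_neg) auto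
  then show ?thesis by (simp add: power2_eq_square algebra_simps)
next
  case False
  then have "(x - 1) * (k * (x - 1)) \<le> (x - 1) * v"
    using assms(2) by (intro mult_left_mono) auto
  then show ?thesis by (simp add: power2_eq_square algebra_simps)
qed

theorem lemma4:
  fixes p q k c :: real
  assumes "q \<ge> 2" and "k > 0" and "p \<ge> q + k + 1"
    and "0 < c" and "c < 1"
    and "c powr (q + k) - c powr (q - 1) = k * (c - 1)"
    and "\<forall>y. 0 < y \<and> y < 1 \<and> y powr (q + k) - y powr (q - 1) = k * (y - 1) \<longrightarrow> y = c"
  shows "\<forall>x \<ge> c. (x - 1) * V' p q x \<ge> k * (x - 1)^2"
proof (intro allI impI)
  fix x assume "c \<le> x"
  have c_root: "gap q k c = 0"
    using assms(6) by (simp add: gap_eq_0_iff)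
  have c_unique: "\<And>y. 0 < y \<Longrightarrow> y < 1 \<Longrightarrow> gap q k y = 0 \<Longrightarrow> y = c"
    using assms(7) by (simp add: gap_eq_0_iff)
  have "1 \<le> q"
    using assms(1) by simp
  note gap_nonneg = gap_nonneg_below_one[OF assms(2) this assms(4) c_root c_unique \<open>c \<le> x\<close>]
  show "k * (x - 1)^2 \<le> (x - 1) * V' p q x"
  proof (rule le_times_square_if_sign_bounds)
    assume "x < 1"
    moreover have "q + k \<le> p - 1" "0 < x"
      using assms(3,4) \<open>c \<le> x\<close> by auto
    ultimately show "V' p q x \<le> k * (x - 1)"
      using V'_below_linear gap_nonneg by blast
  next
    assume "x \<ge> 1"
    then have "(p - q) * (x - 1) \<le> V' p q x"
      using assms(1-3) by (intro V'_above_linear) auto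
    moreover have "k * (x - 1) \<le> (p - q) * (x - 1)"
      using assms(3) \<open>x \<ge> 1\<close> by (intro mult_right_mono) auto
    ultimately show "k * (x - 1) \<le> V' p q x" by linarith
  qed
qed

end
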